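(* Let $X$ be a Banach space as described in the context, let $f\in X$ with Taylor expansion $f(z)=\sum_{k=0}^\infty c_kz^k$ in $\mathbb{D}$. Then for every $n\ge1$, $$|c_n|\,\|z^n\|\le E_n(f)\le \|f\| .$$
   Context: $\mathbb{D}=\{z\in\mathbb{C}:|z|<1\}$. $X$ is a complex Banach space of functions analytic in $\mathbb{D}$ whose norm $\|\cdot\|$ satisfies: (i) $\|f(\cdot\, e^{it})\|=\|f(\cdot)\|$ for all $t\in\mathbb{R}$ and $f\in X$; (ii) $\|f\|<\infty$ for every entire function $f$; (iii) for all $f\in X$ and $g\in L[0,2\pi]$, $\big\|\frac{1}{2\pi}\int_0^{2\pi} f(ze^{it})g(t)\,dt\big\|\le \frac{1}{2\pi}\int_0^{2\pi}|g(t)|\,dt\cdot\|f\|$. For $n\ge 1$, $\mathcal{P}_n$ is the set of complex polynomials of degree at most $n-1$, $E_n(f)=\inf_{p\in\mathcal{P}_n}\|f-p\|$, and $\|z^n\|$ is the norm in $X$ of the monomial $z\mapsto z^n$. *)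

theory Defs
  imports "HOL-Analysis.Analysis"
begin

text \<open>Functions on the unit disc are represented canonically as functions
  complex \<Rightarrow> complex that vanish outside the open unit disc.\<close>

definition restr :: "(complex \<Rightarrow> complex) \<Rightarrow> complex \<Rightarrow> complex" where
  "restr f = (\<lambda>z. if z \<in> ball 0 1 then f z else 0)"

definition rot :: "(complex \<Rightarrow> complex) \<Rightarrow> real \<Rightarrow> complex \<Rightarrow> complex" where
  "rot f t = (\<lambda>z. f (z * exp (\<i> * complex_of_real t)))"

definition conv_op :: "(complex \<Rightarrow> complex) \<Rightarrow> (real \<Rightarrow> complex) \<Rightarrow> complex \<Rightarrow> complex" where
  "conv_op f g = restr (\<lambda>z. (1 / (2 * complex_of_real pi)) *
      (LINT t:{0..2*pi}|lborel. f (z * exp (\<i> * complex_of_real t)) * g t))"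

definition admissible_space :: "(complex \<Rightarrow> complex) set \<Rightarrow> ((complex \<Rightarrow> complex) \<Rightarrow> real) \<Rightarrow> bool" where
  "admissible_space X N \<longleftrightarrow>
     \<comment> \<open>functions analytic in the disc (canonically zero outside)\<close>
     (\<forall>f\<in>X. f analytic_on ball 0 1 \<and> restr f = f) \<and>
     \<comment> \<open>complex vector space\<close>
     (\<lambda>z. 0) \<in> X \<and>
     (\<forall>f\<in>X. \<forall>g\<in>X. (\<lambda>z. f z + g z) \<in> X) \<and>
     (\<forall>f\<in>X. \<forall>c. (\<lambda>z. c * f z) \<in> X) \<and>
     \<comment> \<open>norm\<close>
     (\<forall>f\<in>X. N f \<ge> 0 \<and> (N f = 0 \<longleftrightarrow> f = (\<lambda>z. 0))) \<and>
     (\<forall>f\<in>X. \<forall>c. N (\<lambda>z. c * f z) = cmod c * N f) \<and>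
     (\<forall>f\<in>X. \<forall>g\<in>X. N (\<lambda>z. f z + g z) \<le> N f + N g) \<and>
     \<comment> \<open>completeness\<close>
     (\<forall>F. (\<forall>k. F k \<in> X) \<longrightarrow>
        (\<forall>e>0. \<exists>M. \<forall>m\<ge>M. \<forall>k\<ge>M. N (\<lambda>z. F m z - F k z) < e) \<longrightarrow>
        (\<exists>h\<in>X. (\<lambda>k. N (\<lambda>z. F k z - h z)) \<longlonglongrightarrow> 0)) \<and>
     \<comment> \<open>(i) rotation invariance\<close>
     (\<forall>f\<in>X. \<forall>t. rot f t \<in> X \<and> N (rot f t) = N f) \<and>
     \<comment> \<open>(ii) entire functions belong to X (finite norm)\<close>
     (\<forall>f. f holomorphic_on UNIV \<longrightarrow> restr f \<in> X) \<and>
     \<comment> \<open>(iii)\<close>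
     (\<forall>f\<in>X. \<forall>g. set_integrable lborel {0..2*pi} g \<longrightarrow>
        conv_op f g \<in> X \<and>
        N (conv_op f g) \<le> (1 / (2 * pi)) * (LINT t:{0..2*pi}|lborel. cmod (g t)) * N f)"

definition best_approx :: "((complex \<Rightarrow> complex) \<Rightarrow> real) \<Rightarrow> nat \<Rightarrow> (complex \<Rightarrow> complex) \<Rightarrow> real" where
  "best_approx N n f = Inf {N (\<lambda>z. f z - restr (\<lambda>w. \<Sum>k<n. a k * w ^ k) z) | a. True}"

end

theory Submission
  imports Defs
begin

text \<open>For any polynomial p of degree below n, the Taylor coefficients of h = f - p agree with
  those of f from index n on. Averaging the rotations of h against the unimodular weight
  e^{-int} kills every Taylor term except the n-th, so by (iii) the monomial c_n z^n has norm
  at most that of h. Taking the infimum over p gives the lower bound; p = 0 gives the upper one.\<close>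

lemma sums_set_integral_Icc:
  fixes F :: "nat \<Rightarrow> real \<Rightarrow> 'a::{banach,second_countable_topology}"
  assumes cont: "\<And>k. continuous_on {a..b} (F k)"
    and bound: "\<And>k t. t \<in> {a..b} \<Longrightarrow> norm (F k t) \<le> M k"
    and summable_M: "summable M"
    and sums_G: "\<And>t. t \<in> {a..b} \<Longrightarrow> (\<lambda>k. F k t) sums G t"
  shows "(\<lambda>k. LINT t:{a..b}|lborel. F k t) sums (LINT t:{a..b}|lborel. G t)"
proof -
  define f where "f k t = indicator {a..b} t *\<^sub>R F k t" for k t
  have f_bound: "norm (f k t) \<le> indicator {a..b} t * M k" for k t
    using bound by (simp add: f_def indicator_def)
  have integrable_f: "integrable lborel (f k)" for k
    unfolding f_def by (rule borel_integrable_compact) (auto intro: cont)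
  have integrable_bound: "integrable lborel (\<lambda>t. indicator {a..b} t * M k)" for k
    by (simp add: integrable_indicator_iff emeasure_lborel_Icc_eq)
  have integral_bound: "norm (\<integral>t. norm (f k t) \<partial>lborel) \<le> measure lborel {a..b} * M k" for k
  proof -
    have "(\<integral>t. norm (f k t) \<partial>lborel) \<le> (\<integral>t. indicator {a..b} t * M k \<partial>lborel)"
      using f_bound integrable_f integrable_bound by (intro integral_mono) auto
    then show ?thesis by simp
  qed
  have "AE t in lborel. summable (\<lambda>k. norm (f k t))"
    using f_bound by (intro AE_I2 summable_comparison_test'[OF summable_mult[OF summable_M]]) auto
  moreover have "summable (\<lambda>k. \<integral>t. norm (f k t) \<partial>lborel)"
    using integral_bound by (rule summable_comparison_test'[OF summable_mult[OF summable_M]])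
  ultimately have "(\<lambda>k. integral\<^sup>L lborel (f k)) sums (\<integral>t. (\<Sum>k. f k t) \<partial>lborel)"
    by (rule sums_integral[OF integrable_f])
  moreover have "(\<lambda>t. \<Sum>k. f k t) = (\<lambda>t. indicator {a..b} t *\<^sub>R G t)"
    using sums_G by (auto simp: f_def indicator_def sums_iff)
  ultimately show ?thesis
    by (simp add: set_lebesgue_integral_def f_def[abs_def])
qed

lemma set_integral_exp_int_mult:
  fixes m :: int
  shows "(LINT t:{0..2*pi}|lborel. exp (\<i> * of_int m * complex_of_real t)) =
    (if m = 0 then 2 * pi else 0)"
proof (cases "m = 0")
  case True
  have "(LINT t:{0..2*pi}|lborel. (1::complex)) = measure lborel {0..2*pi} *\<^sub>R 1"
    by (rule set_integral_const) auto
  with True show ?thesis by (simp add: scaleR_conv_of_real)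
next
  case False
  let ?G = "\<lambda>w::complex. exp (\<i> * of_int m * w) / (\<i> * of_int m)"
  let ?F = "\<lambda>t::real. ?G (complex_of_real t)"
  have derivative: "(?F has_vector_derivative
      exp (\<i> * of_int m * complex_of_real t)) (at t within A)" for t A
  proof -
    have "(?G has_field_derivative
        exp (\<i> * of_int m * complex_of_real t) * (\<i> * of_int m) / (\<i> * of_int m)) (at t)"
      by (auto intro!: derivative_eq_intros)
    with False show ?thesis
      by (intro has_vector_derivative_real_field) simp
  qed
  have "(LBINT t=ereal 0..ereal (2*pi). exp (\<i> * of_int m * complex_of_real t)) =
      ?F (2*pi) - ?F 0"
    by (rule interval_integral_FTC_finite) (auto intro!: continuous_intros derivative)
  moreover have "exp (\<i> * of_int m * complex_of_real (2*pi)) = 1"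
    using exp_integer_2pi[of "of_int m"] by (simp add: algebra_simps)
  ultimately show ?thesis
    using False by (simp add: interval_integral_Icc)
qed

lemma powser_coefficient_circle_integral:
  fixes h :: "complex \<Rightarrow> complex" and d :: "nat \<Rightarrow> complex"
  assumes sums_h: "\<forall>w\<in>ball 0 r. (\<lambda>k. d k * w ^ k) sums h w" and z: "z \<in> ball 0 r"
  shows "(LINT t:{0..2*pi}|lborel. h (z * exp (\<i> * complex_of_real t)) *
            exp (\<i> * of_int (- int n) * complex_of_real t)) = 2 * pi * d n * z ^ n"
proof -
  define T where "T k t = d k * z ^ k * exp (\<i> * of_int (int k - int n) * complex_of_real t)"
    for k t
  have norm_T: "norm (T k t) = norm (d k * z ^ k)" for k t
    using norm_exp_i_times[of "of_int (int k - int n) * t"] by (simp add: T_def mult.assoc norm_mult)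
  have "cmod z < r"
    using z by simp
  define s :: real where "s = (r + cmod z) / 2"
  have s: "cmod z < s" "s < r"
    using \<open>cmod z < r\<close> by (simp_all add: s_def)
  moreover have "0 \<le> s"
    using norm_ge_zero[of z] s(1) by linarith
  ultimately have "complex_of_real s \<in> ball 0 r"
    by simp
  then have "summable (\<lambda>k. d k * complex_of_real s ^ k)"
    using sums_h sums_summable by blast
  then have summable_T: "summable (\<lambda>k. norm (d k * z ^ k))"
    by (rule powser_insidea) (use s(1) in simp)
  have sums_T: "(\<lambda>k. T k t) sums
      (h (z * exp (\<i> * complex_of_real t)) * exp (\<i> * of_int (- int n) * complex_of_real t))" for t
  proof -
    have "z * exp (\<i> * complex_of_real t) \<in> ball 0 r"
      using z by (simp add: norm_mult)
    then have "(\<lambda>k. d k * (z * exp (\<i> * complex_of_real t)) ^ k *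
        exp (\<i> * of_int (- int n) * complex_of_real t)) sums
        (h (z * exp (\<i> * complex_of_real t)) * exp (\<i> * of_int (- int n) * complex_of_real t))"
      using sums_h by (intro sums_mult2) auto
    moreover have "exp (\<i> * complex_of_real t) ^ k * exp (\<i> * of_int (- int n) * complex_of_real t) =
        exp (\<i> * of_int (int k - int n) * complex_of_real t)" for k
      by (simp add: exp_of_nat_mult[symmetric] exp_add[symmetric] algebra_simps)
    ultimately show ?thesis
      by (simp add: T_def power_mult_distrib mult.assoc)
  qed
  have "continuous_on {0..2*pi} (T k)" for k
    unfolding T_def by (intro continuous_intros)
  then have "(\<lambda>k. LINT t:{0..2*pi}|lborel. T k t) sums
      (LINT t:{0..2*pi}|lborel. h (z * exp (\<i> * complex_of_real t)) *
        exp (\<i> * of_int (- int n) * complex_of_real t))"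
    by (rule sums_set_integral_Icc[OF _ _ summable_T sums_T]) (simp_all add: norm_T)
  moreover have "(LINT t:{0..2*pi}|lborel. T k t) = (if k = n then 2 * pi * d n * z ^ n else 0)" for k
    unfolding T_def set_integral_mult_right set_integral_exp_int_mult by simp
  ultimately show ?thesis
    using sums_single[of n "\<lambda>_. 2 * pi * d n * z ^ n"] sums_unique2 by fastforce
qed

lemma conv_op_exp_eq_coefficient:
  fixes h :: "complex \<Rightarrow> complex" and d :: "nat \<Rightarrow> complex"
  assumes "\<forall>w\<in>ball 0 1. (\<lambda>k. d k * w ^ k) sums h w"
  shows "conv_op h (\<lambda>t. exp (\<i> * of_int (- int n) * complex_of_real t)) =
    (\<lambda>z. d n * restr (\<lambda>z. z ^ n) z)"
  using powser_coefficient_circle_integral[OF assms] by (auto simp: conv_op_def restr_def)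

lemma sums_diff_polynomial:
  fixes f :: "complex \<Rightarrow> complex" and c a :: "nat \<Rightarrow> complex"
  assumes sums_f: "\<forall>w\<in>ball 0 1. (\<lambda>k. c k * w ^ k) sums f w"
  shows "\<forall>w\<in>ball 0 1. (\<lambda>k. (c k - (if k < n then a k else 0)) * w ^ k) sums
    (f w - restr (\<lambda>w. \<Sum>k<n. a k * w ^ k) w)"
proof
  fix w :: complex assume w: "w \<in> ball 0 1"
  have "(\<lambda>k. if k \<in> {..<n} then a k * w ^ k else 0) sums (\<Sum>k<n. a k * w ^ k)"
    by (rule sums_If_finite_set) simp
  moreover have "(\<lambda>k. if k \<in> {..<n} then a k * w ^ k else 0) = (\<lambda>k. (if k < n then a k else 0) * w ^ k)"
    by auto
  ultimately have "(\<lambda>k. (if k < n then a k else 0) * w ^ k) sums restr (\<lambda>w. \<Sum>k<n. a k * w ^ k) w"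
    using w by (simp add: restr_def)
  from sums_diff[OF sums_f[rule_format, OF w] this] show "(\<lambda>k. (c k - (if k < n then a k else 0)) * w ^ k) sums
    (f w - restr (\<lambda>w. \<Sum>k<n. a k * w ^ k) w)"
    by (simp add: algebra_simps)
qed

lemma
  assumes "admissible_space X N"
  shows admissible_space_add: "\<lbrakk>f \<in> X; g \<in> X\<rbrakk> \<Longrightarrow> (\<lambda>z. f z + g z) \<in> X"
    and admissible_space_scale: "f \<in> X \<Longrightarrow> (\<lambda>z. a * f z) \<in> X"
    and admissible_space_norm_scale: "f \<in> X \<Longrightarrow> N (\<lambda>z. a * f z) = cmod a * N f"
    and admissible_space_restr_entire: "f holomorphic_on UNIV \<Longrightarrow> restr f \<in> X"
    and admissible_space_norm_conv_op_le: "\<lbrakk>f \<in> X; set_integrable lborel {0..2*pi} w\<rbrakk> \<Longrightarrow>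
      N (conv_op f w) \<le> 1 / (2 * pi) * (LINT t:{0..2*pi}|lborel. cmod (w t)) * N f"
  using assms unfolding admissible_space_def by simp_all

lemma admissible_space_diff:
  assumes "admissible_space X N" "f \<in> X" "g \<in> X"
  shows "(\<lambda>z. f z - g z) \<in> X"
  using admissible_space_add[OF assms(1,2) admissible_space_scale[OF assms(1,3), of "-1"]] by simp

lemma admissible_space_norm_conv_op_unimodular:
  assumes adm: "admissible_space X N" and f: "f \<in> X"
    and g: "continuous_on {0..2*pi} g" "\<And>t. cmod (g t) = 1"
  shows "N (conv_op f g) \<le> N f"
proof -
  have "set_integrable lborel {0..2*pi} g"
    unfolding set_integrable_def by (rule borel_integrable_compact[OF _ g(1)]) simp
  then have "N (conv_op f g) \<le> 1 / (2 * pi) * (LINT t:{0..2*pi}|lborel. cmod (g t)) * N f"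
    by (rule admissible_space_norm_conv_op_le[OF adm f])
  moreover have "(LINT t:{0..2*pi}|lborel. cmod (g t)) = 2 * pi"
    using set_integral_const[of "{0..2*pi}" lborel "1::real"] by (simp add: g(2))
  ultimately show ?thesis by simp
qed

lemma norm_coefficient_monomial_le_norm_diff_polynomial:
  fixes f :: "complex \<Rightarrow> complex" and c a :: "nat \<Rightarrow> complex"
  assumes adm: "admissible_space X N" and f: "f \<in> X"
    and sums_f: "\<forall>z\<in>ball 0 1. (\<lambda>k. c k * z ^ k) sums f z"
  shows "cmod (c n) * N (restr (\<lambda>z. z ^ n)) \<le> N (\<lambda>z. f z - restr (\<lambda>w. \<Sum>k<n. a k * w ^ k) z)"
proof -
  define h where "h = (\<lambda>z. f z - restr (\<lambda>w. \<Sum>k<n. a k * w ^ k) z)"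
  have "h \<in> X"
    unfolding h_def using adm f
    by (intro admissible_space_diff admissible_space_restr_entire) (auto intro!: holomorphic_intros)
  have "conv_op h (\<lambda>t. exp (\<i> * of_int (- int n) * complex_of_real t)) =
      (\<lambda>z. c n * restr (\<lambda>z. z ^ n) z)"
    unfolding h_def using conv_op_exp_eq_coefficient[OF sums_diff_polynomial[OF sums_f]] by simp
  moreover have "restr (\<lambda>z. z ^ n) \<in> X"
    using adm by (rule admissible_space_restr_entire) (intro holomorphic_intros)
  then have "N (\<lambda>z. c n * restr (\<lambda>z. z ^ n) z) = cmod (c n) * N (restr (\<lambda>z. z ^ n))"
    by (rule admissible_space_norm_scale[OF adm])
  moreover have "N (conv_op h (\<lambda>t. exp (\<i> * of_int (- int n) * complex_of_real t))) \<le> N h"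
    using norm_exp_i_times[of "of_int (- int n) * _"]
    by (intro admissible_space_norm_conv_op_unimodular[OF adm \<open>h \<in> X\<close>])
      (auto intro!: continuous_intros simp: mult.assoc)
  ultimately show ?thesis
    unfolding h_def by simp
qed

theorem lemma4p1:
  fixes X :: "(complex \<Rightarrow> complex) set" and N :: "(complex \<Rightarrow> complex) \<Rightarrow> real"
    and f :: "complex \<Rightarrow> complex" and c :: "nat \<Rightarrow> complex" and n :: nat
  assumes "admissible_space X N"
    and "f \<in> X"
    and "\<forall>z\<in>ball 0 1. (\<lambda>k. c k * z ^ k) sums f z"
    and "n \<ge> 1"
  shows "cmod (c n) * N (restr (\<lambda>z. z ^ n)) \<le> best_approx N n f \<and> best_approx N n f \<le> N f"
proof -
  let ?S = "{N (\<lambda>z. f z - restr (\<lambda>w. \<Sum>k<n. a k * w ^ k) z) | a. True}"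
  have lower: "cmod (c n) * N (restr (\<lambda>z. z ^ n)) \<le> x" if "x \<in> ?S" for x
    using that norm_coefficient_monomial_le_norm_diff_polynomial[OF assms(1-3)] by blast
  have upper: "N f \<in> ?S"
    by (rule CollectI, rule exI[of _ "\<lambda>_. 0"]) (simp add: restr_def)
  then have "?S \<noteq> {}"
    by blast
  then have "cmod (c n) * N (restr (\<lambda>z. z ^ n)) \<le> Inf ?S"
    by (rule cInf_greatest) (rule lower)
  moreover from lower have "bdd_below ?S"
    by (rule bdd_belowI)
  then have "Inf ?S \<le> N f"
    by (rule cInf_lower[OF upper])
  ultimately show ?thesis
    unfolding best_approx_def by (rule conjI)
qed

end
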